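(* Let $N\ge2$ be an integer and let $B=(b_{i,j})_{i,j=1}^{N-1}$ be the symmetric Toeplitz matrix with $b_{i,i}=\frac{2N}{3}-1$, $b_{i,j}=\frac N6-1$ if $|i-j|=1$, and $b_{i,j}=-1$ if $|i-j|\ge2$. Let $L_{N-1}=\mathrm{tridiag}(-1,2,-1)$ be the $(N-1)\times(N-1)$ one-dimensional discrete Laplacian. Then $H:=B-\frac N{12}L_{N-1}$ is positive semi-definite. Moreover, $H$ is singular when $N$ is even and positive definite when $N$ is odd. *)

theory Defs
  imports "Jordan_Normal_Form.Determinant"
begin

(* Matrices are Jordan_Normal_Form matrices; rows/columns are indexed 0..n-1
   (the paper's index i corresponds to i-1 here; |i-j| is unchanged). *)

definition Bmat :: "nat \<Rightarrow> real mat" where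
  "Bmat N = mat (N - 1) (N - 1) (\<lambda>(i, j).
      if i = j then 2 * real N / 3 - 1
      else if i + 1 = j \<or> j + 1 = i then real N / 6 - 1
      else -1)"

definition Lap :: "nat \<Rightarrow> real mat" where
  "Lap n = mat n n (\<lambda>(i, j).
      if i = j then 2
      else if i + 1 = j \<or> j + 1 = i then -1
      else 0)"

definition Hmat :: "nat \<Rightarrow> real mat" where
  "Hmat N = Bmat N - (real N / 12) \<cdot>\<^sub>m Lap (N - 1)"

definition psd_mat :: "real mat \<Rightarrow> bool" where
  "psd_mat A \<longleftrightarrow> A \<in> carrier_mat (dim_row A) (dim_row A) \<and>
     (\<forall>v \<in> carrier_vec (dim_row A). v \<bullet> (A *\<^sub>v v) \<ge> 0)"

definition pd_mat :: "real mat \<Rightarrow> bool" where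
  "pd_mat A \<longleftrightarrow> A \<in> carrier_mat (dim_row A) (dim_row A) \<and>
     (\<forall>v \<in> carrier_vec (dim_row A). v \<noteq> 0\<^sub>v (dim_row A) \<longrightarrow> v \<bullet> (A *\<^sub>v v) > 0)"

end

theory Submission
  imports Defs
begin

(* Extend x by zero to x_{-1} = x_{N-1} = 0 and put w_k = x_{k-1} + x_k for 0 <= k <= N-1.
   Since H = (N/4) (2 I + path adjacency) - (all-ones matrix), one finds
   x^T H x = (N * sum w_k^2 - (sum w_k)^2) / 4 = (1/8) sum_{j,k} (w_j - w_k)^2 >= 0,
   with equality iff w is constant. A constant w forces x = (a, 0, a, 0, ...), and the
   boundary condition x_{N-1} = 0 admits a <> 0 exactly when N is even; then
   (1, 0, 1, ..., 0, 1) lies in the kernel of H. *)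

definition adj_sum :: "(nat \<Rightarrow> real) \<Rightarrow> nat \<Rightarrow> real" where
  "adj_sum x k = (if k = 0 then 0 else x (k - 1)) + x k"

lemma sum_adj_sum: "(\<Sum>k\<le>n. adj_sum x k) = 2 * (\<Sum>k<n. x k) + x n"
  by (induction n) (simp_all add: adj_sum_def)

lemma sum_power2_adj_sum:
  "(\<Sum>k\<le>n. (adj_sum x k)\<^sup>2) = (\<Sum>k<n. x k * (adj_sum x k + adj_sum x (Suc k))) + x n * adj_sum x n"
  by (induction n) (simp_all add: adj_sum_def power2_eq_square algebra_simps)

lemma adj_sum_const_imp_alternating:
  assumes "\<And>k. k \<le> n \<Longrightarrow> adj_sum x k = a" and "k \<le> n"
  shows "x k = (if even k then a else 0)"
  using assms(2)
proof (induction k)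
  case 0
  then show ?case using assms(1)[of 0] by (simp add: adj_sum_def)
next
  case (Suc k)
  then show ?case using assms(1)[of "Suc k"] by (auto simp: adj_sum_def)
qed

lemma sum_sum_power2_diff:
  fixes w :: "'a \<Rightarrow> 'b::comm_ring_1"
  shows "(\<Sum>j\<in>A. \<Sum>k\<in>A. (w j - w k)\<^sup>2) = 2 * (of_nat (card A) * (\<Sum>k\<in>A. (w k)\<^sup>2) - (\<Sum>k\<in>A. w k)\<^sup>2)"
proof -
  have "(\<Sum>j\<in>A. \<Sum>k\<in>A. (w j - w k)\<^sup>2)
      = (\<Sum>j\<in>A. \<Sum>k\<in>A. (w j)\<^sup>2) + (\<Sum>j\<in>A. \<Sum>k\<in>A. (w k)\<^sup>2) - 2 * (\<Sum>j\<in>A. \<Sum>k\<in>A. w j * w k)"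
    by (simp add: power2_diff sum.distrib sum_subtractf sum_distrib_left mult.assoc)
  also have "(\<Sum>j\<in>A. \<Sum>k\<in>A. (w j)\<^sup>2) = of_nat (card A) * (\<Sum>k\<in>A. (w k)\<^sup>2)"
    by (simp add: sum_distrib_left)
  also have "(\<Sum>j\<in>A. \<Sum>k\<in>A. (w k)\<^sup>2) = of_nat (card A) * (\<Sum>k\<in>A. (w k)\<^sup>2)"
    by simp
  also have "(\<Sum>j\<in>A. \<Sum>k\<in>A. w j * w k) = (\<Sum>k\<in>A. w k)\<^sup>2"
    by (simp add: sum_product power2_eq_square)
  finally show ?thesis by (simp add: right_diff_distrib)
qed

lemma sum_sum_power2_diff_eq_0_iff:
  fixes w :: "'a \<Rightarrow> 'b::linordered_idom"
  assumes "finite A"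
  shows "(\<Sum>j\<in>A. \<Sum>k\<in>A. (w j - w k)\<^sup>2) = 0 \<longleftrightarrow> (\<forall>j\<in>A. \<forall>k\<in>A. w j = w k)"
  using assms by (simp add: sum_nonneg_eq_0_iff sum_nonneg)

definition zero_ext :: "'a::zero vec \<Rightarrow> nat \<Rightarrow> 'a" where
  "zero_ext v k = (if k < dim_vec v then v $ k else 0)"

lemma Hmat_carrier: "Hmat N \<in> carrier_mat (N - 1) (N - 1)"
  unfolding Hmat_def Bmat_def Lap_def by auto

lemma Hmat_index:
  assumes "i < N - 1" and "j < N - 1"
  shows "Hmat N $$ (i, j) =
    real N / 4 * (if i = j then 2 else if i + 1 = j \<or> j + 1 = i then 1 else 0) - 1"
  using assms unfolding Hmat_def Bmat_def Lap_def by auto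

lemma Hmat_mult_vec_index:
  assumes v: "v \<in> carrier_vec n" and i: "i < n"
  defines "x \<equiv> zero_ext v"
  shows "(Hmat (Suc n) *\<^sub>v v) $ i =
    real (Suc n) / 4 * (adj_sum x i + adj_sum x (Suc i)) - (\<Sum>k<n. x k)"
proof -
  have band: "(if i = j then 2 else if i + 1 = j \<or> j + 1 = i then 1 else 0) * x j =
      (if j = i then 2 * x j else 0) + (if 0 < i \<and> j = i - 1 then x j else 0) +
      (if j = Suc i then x j else 0)"
    for j by auto
  have "(Hmat (Suc n) *\<^sub>v v) $ i = (\<Sum>j<n. Hmat (Suc n) $$ (i, j) * x j)"
    using Hmat_carrier[of "Suc n"] v i
    by (auto simp: scalar_prod_def lessThan_atLeast0 x_def zero_ext_def intro!: sum.cong)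
  also have "\<dots> = real (Suc n) / 4 *
      (\<Sum>j<n. (if i = j then 2 else if i + 1 = j \<or> j + 1 = i then 1 else 0) * x j) - (\<Sum>j<n. x j)"
    using i by (simp add: Hmat_index sum_subtractf sum_distrib_left left_diff_distrib mult.assoc)
  also have "(\<Sum>j<n. (if i = j then 2 else if i + 1 = j \<or> j + 1 = i then 1 else 0) * x j) =
      adj_sum x i + adj_sum x (Suc i)"
    unfolding band using i v by (auto simp: sum.distrib adj_sum_def x_def zero_ext_def)
  finally show ?thesis .
qed

lemma scalar_prod_Hmat:
  assumes v: "v \<in> carrier_vec n"
  defines "w \<equiv> adj_sum (zero_ext v)"
  shows "v \<bullet> (Hmat (Suc n) *\<^sub>v v) = (\<Sum>j\<le>n. \<Sum>k\<le>n. (w j - w k)\<^sup>2) / 8"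
proof -
  define x where "x = zero_ext v"
  have xn: "x n = 0"
    using v by (simp add: x_def zero_ext_def)
  have "v \<bullet> (Hmat (Suc n) *\<^sub>v v) = (\<Sum>i<n. x i * (Hmat (Suc n) *\<^sub>v v) $ i)"
    unfolding scalar_prod_def using v Hmat_carrier[of "Suc n"]
    by (simp add: lessThan_atLeast0 x_def zero_ext_def del: index_mult_mat_vec)
  also have "\<dots> = real (Suc n) / 4 * (\<Sum>i<n. x i * (w i + w (Suc i))) - (\<Sum>k<n. x k)\<^sup>2"
  proof -
    have "(\<Sum>i<n. x i * (Hmat (Suc n) *\<^sub>v v) $ i) =
        (\<Sum>i<n. real (Suc n) / 4 * (x i * (w i + w (Suc i))) - (\<Sum>k<n. x k) * x i)"
      by (rule sum.cong) (simp_all add: Hmat_mult_vec_index[OF v] w_def x_def algebra_simps)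
    then show ?thesis
      by (simp only: sum_subtractf sum_distrib_left[symmetric] power2_eq_square)
  qed
  also have "\<dots> = (real (Suc n) * (\<Sum>k\<le>n. (w k)\<^sup>2) - (\<Sum>k\<le>n. w k)\<^sup>2) / 4"
    using sum_adj_sum[where x = x and n = n] sum_power2_adj_sum[where x = x and n = n] xn
    by (simp add: w_def x_def[symmetric] power2_eq_square field_simps)
  also have "\<dots> = (\<Sum>j\<le>n. \<Sum>k\<le>n. (w j - w k)\<^sup>2) / 8"
    using sum_sum_power2_diff[of w "{..n}"] by simp
  finally show ?thesis .
qed

lemma psd_mat_Hmat: "psd_mat (Hmat (Suc n))"
  unfolding psd_mat_def
  using Hmat_carrier[of "Suc n"] by (auto simp: scalar_prod_Hmat intro!: sum_nonneg)

lemma scalar_prod_Hmat_eq_0_imp_alternating: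
  fixes v :: "real vec"
  assumes v: "v \<in> carrier_vec n" and null: "v \<bullet> (Hmat (Suc n) *\<^sub>v v) = 0" and k: "k \<le> n"
  shows "zero_ext v k = (if even k then zero_ext v 0 else 0)"
proof -
  define w where "w = adj_sum (zero_ext v)"
  have "(\<Sum>j\<le>n. \<Sum>k\<le>n. (w j - w k)\<^sup>2) = 0"
    using null unfolding scalar_prod_Hmat[OF v] w_def by simp
  then have "w j = w 0" if "j \<le> n" for j
    using that sum_sum_power2_diff_eq_0_iff[of "{..n}" w] by blast
  moreover have "w 0 = zero_ext v 0"
    by (simp add: w_def adj_sum_def)
  ultimately have "adj_sum (zero_ext v) j = zero_ext v 0" if "j \<le> n" for j
    using that unfolding w_def by metis
  then show ?thesis
    by (rule adj_sum_const_imp_alternating[OF _ k])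
qed

lemma pd_mat_Hmat:
  assumes "even n"
  shows "pd_mat (Hmat (Suc n))"
  unfolding pd_mat_def
proof (intro conjI ballI impI)
  show "Hmat (Suc n) \<in> carrier_mat (dim_row (Hmat (Suc n))) (dim_row (Hmat (Suc n)))"
    using Hmat_carrier[of "Suc n"] by simp
  fix v :: "real vec" assume v_dim: "v \<in> carrier_vec (dim_row (Hmat (Suc n)))"
    and nonzero: "v \<noteq> 0\<^sub>v (dim_row (Hmat (Suc n)))"
  have v: "v \<in> carrier_vec n"
    using v_dim Hmat_carrier[of "Suc n"] by simp
  show "v \<bullet> (Hmat (Suc n) *\<^sub>v v) > 0"
  proof (rule ccontr)
    assume "\<not> ?thesis"
    moreover have "v \<bullet> (Hmat (Suc n) *\<^sub>v v) \<ge> 0"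
      using psd_mat_Hmat[of n] v Hmat_carrier[of "Suc n"] unfolding psd_mat_def by auto
    ultimately have null: "v \<bullet> (Hmat (Suc n) *\<^sub>v v) = 0"
      by simp
    have "zero_ext v 0 = 0"
      using scalar_prod_Hmat_eq_0_imp_alternating[OF v null, of n] v assms
      by (simp add: zero_ext_def)
    then have "v $ k = 0" if "k < n" for k
      using scalar_prod_Hmat_eq_0_imp_alternating[OF v null, of k] v that
      by (simp add: zero_ext_def split: if_splits)
    then show False
      using nonzero v Hmat_carrier[of "Suc n"] by (auto intro: eq_vecI)
  qed
qed

lemma Hmat_mult_vec_eq_0:
  fixes v :: "real vec"
  assumes v: "v \<in> carrier_vec n" and ones: "\<And>k. k \<le> n \<Longrightarrow> adj_sum (zero_ext v) k = 1"
  shows "Hmat (Suc n) *\<^sub>v v = 0\<^sub>v n"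
proof (rule eq_vecI)
  have "2 * (\<Sum>k<n. zero_ext v k) = real (Suc n)"
    using sum_adj_sum[where x = "zero_ext v" and n = n] v ones by (simp add: zero_ext_def)
  then show "(Hmat (Suc n) *\<^sub>v v) $ i = 0\<^sub>v n $ i" if "i < dim_vec (0\<^sub>v n)" for i
    using that Hmat_mult_vec_index[OF v, of i] ones[of i] ones[of "Suc i"] by simp
qed (use Hmat_carrier[of "Suc n"] in simp)

lemma det_Hmat_eq_0:
  assumes "odd n"
  shows "det (Hmat (Suc n)) = 0"
proof -
  define u where "u = vec n (\<lambda>k. if even k then 1 else 0 :: real)"
  have u: "u \<in> carrier_vec n"
    by (simp add: u_def)
  have "adj_sum (zero_ext u) k = 1" if "k \<le> n" for k
  proof (cases "k = n")
    case True
    then show ?thesis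
      using assms by (simp add: adj_sum_def zero_ext_def u_def odd_pos)
  next
    case False
    then show ?thesis
      using that by (cases k) (simp_all add: adj_sum_def zero_ext_def u_def)
  qed
  then have "Hmat (Suc n) *\<^sub>v u = 0\<^sub>v n"
    using Hmat_mult_vec_eq_0[OF u] by blast
  moreover have "u \<noteq> 0\<^sub>v n"
  proof
    assume "u = 0\<^sub>v n"
    then have "u $ 0 = 0"
      using assms by (simp add: odd_pos)
    then show False
      using assms by (simp add: u_def odd_pos)
  qed
  ultimately show ?thesis
    using det_0_iff_vec_prod_zero[OF Hmat_carrier[of "Suc n", simplified]] u by blast
qed

theorem lemma4p4:
  fixes N :: nat
  assumes "N \<ge> 2"
  shows "psd_mat (Hmat N) \<and> (even N \<longrightarrow> det (Hmat N) = 0) \<and> (odd N \<longrightarrow> pd_mat (Hmat N))"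
proof -
  obtain n where "N = Suc n"
    using assms by (cases N) auto
  then show ?thesis
    using psd_mat_Hmat pd_mat_Hmat det_Hmat_eq_0 by auto
qed

end
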